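(* Let $r\ge1$ and $$\Psi(x^{-1},\hbar):=\sum_{n\ge0}\frac{x^{-rn}}{n!\,\hbar^n r^n}\prod_{j=1}^{rn-1}(1+j\hbar),$$ a formal power series in $x^{-1}$ (the principal specialization of the strictly monotone orbifold Hurwitz generating function). Then $$\Big[\hat x^{1/\hbar}\big(\hat y^r-\hat x\hat y+1\big)\hat x^{-1/\hbar}\Big]\Psi(x^{-1},\hbar)=0,\qquad\hat x=x\cdot,\ \hat y=-\hbar\frac{\partial}{\partial x},$$ equivalently $\big[(-\hbar\partial_x)^r+\hbar x\partial_x+1\big]\big(x^{-1/\hbar}\Psi\big)=0$ after multiplication by $x^{1/\hbar}$, i.e. $\big[(x^{-1}-\hbar\partial_x)^r+\hbar x\partial_x\big]\Psi=0$.
   Context: The empty product (for $n=0$ and, when $r=1$, for $n=1$) equals $1$. Conjugation by $x^{\pm1/\hbar}$ is understood formally: $x^{1/\hbar}\partial_x x^{-1/\hbar}=\partial_x-\frac{1}{\hbar x}$. *)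

theory Defs
  imports "HOL-Computational_Algebra.Formal_Power_Series"
begin

(* Formal power series in the variable z = x^{-1}; fps_X stands for x^{-1}.
   The parameter hbar is a nonzero element h of a field of characteristic 0. *)

(* d/dx acting on series in x^{-1}: since x = 1/z, d/dx = -z^2 d/dz *)
definition dx :: "'a::field_char_0 fps \<Rightarrow> 'a fps" where
  "dx f = - (fps_X ^ 2 * fps_deriv f)"

(* x * d/dx acting on series in x^{-1}: x d/dx = - z d/dz *)
definition x_dx :: "'a::field_char_0 fps \<Rightarrow> 'a fps" where
  "x_dx f = - (fps_X * fps_deriv f)"

definition opA :: "'a::field_char_0 \<Rightarrow> 'a fps \<Rightarrow> 'a fps" where
  "opA h f = fps_X * f - fps_const h * dx f"

definition Psi :: "nat \<Rightarrow> 'a::field_char_0 \<Rightarrow> 'a fps" where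
  "Psi r h = Abs_fps (\<lambda>m. if r dvd m then
      (\<Prod>j\<in>{1..<r * (m div r)}. 1 + of_nat j * h)
        / (fact (m div r) * h ^ (m div r) * of_nat r ^ (m div r))
    else 0)"

end

theory Submission
  imports Defs
begin

text \<open>
  In the variable z = 1/x the operator 1/x - h d/dx is the weighted shift
  z^m \<mapsto> (1 + m h) z^(m+1), while h x d/dx multiplies z^n by -n h.
  So the equation says that the coefficients c(n) of Psi satisfy
  n h c(n) = (1 + (n-r) h) \<cdot>\<cdot>\<cdot> (1 + (n-1) h) c(n-r):
  for n = r(q+1) this is the ratio of consecutive terms of Psi, and for all other n
  both sides vanish.
\<close>

unbundle fps_syntax

lemma opA_nth_0 [simp]: "opA h f $ 0 = 0"
  by (simp add: opA_def dx_def power2_eq_square)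

lemma opA_nth_Suc [simp]: "opA h f $ Suc m = (1 + of_nat m * h) * f $ m"
proof -
  have "(fps_X ^ 2 * fps_deriv f) $ Suc m = of_nat m * f $ m"
    by (cases m) (simp_all add: fps_X_power_mult_nth)
  then show ?thesis
    by (simp add: opA_def dx_def algebra_simps)
qed

lemma opA_power_nth_less:
  assumes "n < k"
  shows "((opA h) ^^ k) f $ n = 0"
  using assms
proof (induction k arbitrary: n)
  case (Suc k)
  then show ?case
    by (cases n) simp_all
qed simp

lemma opA_power_nth_add:
  "((opA h) ^^ k) f $ (n + k) = (\<Prod>j\<in>{n..<n + k}. 1 + of_nat j * h) * f $ n"
  by (induction k) (simp_all add: prod.op_ivl_Suc algebra_simps)

lemma x_dx_nth: "x_dx f $ n = - (of_nat n * f $ n)"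
  by (cases n) (simp_all add: x_dx_def)

lemma Psi_nth_not_dvd:
  assumes "\<not> r dvd n"
  shows "Psi r h $ n = 0"
  using assms by (simp add: Psi_def)

lemma prod_atLeast_1_eq_atLeast_0:
  fixes g :: "nat \<Rightarrow> 'a::comm_monoid_mult"
  assumes "g 0 = 1"
  shows "prod g {1..<N} = prod g {0..<N}"
  using assms by (cases N) (simp_all add: prod.atLeast_Suc_lessThan)

lemma Psi_nth_mult:
  assumes "r > 0"
  shows "Psi r h $ (r * q) =
    (\<Prod>j\<in>{0..<r * q}. 1 + of_nat j * h) / (fact q * h ^ q * of_nat r ^ q)"
  using assms prod_atLeast_1_eq_atLeast_0[of "\<lambda>j. 1 + of_nat j * h" "r * q"] by (simp add: Psi_def)

lemma Psi_nth_recurrence: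
  fixes h :: "'a::field_char_0"
  assumes "r > 0" and "h \<noteq> 0"
  shows "h * of_nat (r * q + r) * Psi r h $ (r * q + r) =
    (\<Prod>j\<in>{r * q..<r * q + r}. 1 + of_nat j * h) * Psi r h $ (r * q)"
proof -
  define P where "P N = (\<Prod>j\<in>{0..<N}. 1 + of_nat j * h)" for N
  define D where "D = fact q * h ^ q * (of_nat r :: 'a) ^ q"
  define c where "c = h * of_nat (r * q + r)"
  have "c \<noteq> 0"
    using assms by (simp add: c_def del: of_nat_add of_nat_mult)
  have idx: "r * q + r = r * Suc q"
    by simp
  have denominator: "fact (Suc q) * h ^ Suc q * of_nat r ^ Suc q = c * D"
    by (simp add: c_def D_def fact_Suc algebra_simps)
  have "Psi r h $ (r * q + r) = P (r * q + r) / (c * D)"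
    unfolding idx P_def denominator[symmetric] by (rule Psi_nth_mult[OF assms(1)])
  then have "c * Psi r h $ (r * q + r) = c * (P (r * q + r) / (c * D))"
    by simp
  also have "\<dots> = P (r * q + r) / D"
    using \<open>c \<noteq> 0\<close> by simp
  also have "P (r * q + r) = (\<Prod>j\<in>{r * q..<r * q + r}. 1 + of_nat j * h) * P (r * q)"
    unfolding P_def by (subst mult.commute, rule prod.atLeastLessThan_concat[symmetric]) simp_all
  also have "\<dots> / D = (\<Prod>j\<in>{r * q..<r * q + r}. 1 + of_nat j * h) * Psi r h $ (r * q)"
    by (simp add: Psi_nth_mult[OF assms(1)] P_def D_def)
  finally show ?thesis
    unfolding c_def .
qed

lemma opA_power_Psi_nth:
  fixes h :: "'a::field_char_0"
  assumes "r > 0" and "h \<noteq> 0"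
  shows "((opA h) ^^ r) (Psi r h) $ n = h * of_nat n * Psi r h $ n"
proof (cases "n < r")
  case True
  then have "n = 0 \<or> \<not> r dvd n"
    by (auto dest: dvd_imp_le)
  with True show ?thesis
    by (auto simp: opA_power_nth_less Psi_nth_not_dvd)
next
  case False
  define m where "m = n - r"
  with False have n: "n = m + r"
    by simp
  show ?thesis
  proof (cases "r dvd m")
    case True
    then obtain q where m: "m = r * q" ..
    have "((opA h) ^^ r) (Psi r h) $ n =
        (\<Prod>j\<in>{r * q..<r * q + r}. 1 + of_nat j * h) * Psi r h $ (r * q)"
      unfolding n m by (rule opA_power_nth_add)
    also have "\<dots> = h * of_nat n * Psi r h $ n"
      using Psi_nth_recurrence[OF assms] by (simp add: n m)
    finally show ?thesis .
  next
    case False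
    then show ?thesis
      by (simp add: n opA_power_nth_add Psi_nth_not_dvd)
  qed
qed

theorem proposition7p1:
  fixes r :: nat and h :: "'a::field_char_0"
  assumes "r \<ge> 1" and "h \<noteq> 0"
  shows "((opA h) ^^ r) (Psi r h) + fps_const h * x_dx (Psi r h) = 0"
proof (rule fps_ext)
  fix n
  have "r > 0"
    using assms(1) by simp
  then show "(((opA h) ^^ r) (Psi r h) + fps_const h * x_dx (Psi r h)) $ n = 0 $ n"
    using opA_power_Psi_nth[OF _ assms(2)] by (simp add: x_dx_nth)
qed

end
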